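(* Let $S$ be a set of bilabelled graphs, let $\mathscr{C}$ be the skew graph category generated by $S$ (the smallest skew graph category containing $S$), and let $F=\{(K,g_{\mathbf{a}}^{-1}g_{\mathbf{b}})\mid (K,\mathbf{a},\mathbf{b})\in\mathscr{C}\}$ be the corresponding graph fibration. Then every graph in the closure of $\{N_0,N_1\}\cup\{H\mid (H,\mathbf{a},\mathbf{b})\in S\}$ under arbitrary $f$-unions satisfies $F(K)\ne\emptyset$, and for every graph $K$ with $F(K)\neq\emptyset$, $$F(K)=\langle\!\langle \iota(g_{\mathbf{a}^*\mathbf{b}})\mid (H,\mathbf{a},\mathbf{b})\in S,\ \iota\colon H\to K\text{ an injective graph homomorphism}\rangle\!\rangle\trianglelefteq\mathbb{Z}_2^{*V(K)},$$ where $\langle\!\langle\cdot\rangle\!\rangle$ denotes the normal subgroup generated.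
   Context: Graphs are finite, undirected, without multiple edges, loops allowed, considered up to isomorphism; $N_k$ is the edgeless graph on $k$ vertices. For a set $V$, $\mathbb{Z}_2^{*V}$ is the group generated by $V$ subject to $v^2=e$; for a tuple $\mathbf{a}=(a_1,\dots,a_k)$ over $V$, $g_{\mathbf{a}}=a_1\cdots a_k$, and $\mathbf{a}^*$ is the reversed tuple, $\mathbf{a}^*\mathbf{b}$ the concatenation (so $g_{\mathbf{a}^*\mathbf{b}}=g_{\mathbf{a}}^{-1}g_{\mathbf{b}}$). A map $\phi\colon V\to V'$ induces maps on tuples and a homomorphism $\mathbb{Z}_2^{*V}\to\mathbb{Z}_2^{*V'}$, also denoted $\phi$. A vertex overlap of graphs $K,H$ is a subset $f\subset V(K)\times V(H)$ in which each vertex occurs at most once; $K\cup_fH$ is the quotient of $K\sqcup H$ identifying $v$ with $w$ for $(v,w)\in f$ (an edge between two vertices of the quotient iff there is one between some representatives); $f_K,f_H$ are the induced maps. The closure of a set of graphs under $f$-unions is the smallest set containing it and containing $K\cup_fH$ whenever it contains $K,H$. For a set $F$ of pairs $(K,a)$ with $a\in\mathbb{Z}_2^{*V(K)}$ (up to graph isomorphism), $F(K):=\{a\mid (K,a)\in F\}$. Bilabelled graph: $(K,\mathbf{a},\mathbf{b})$ with $K$ a graph, $\mathbf{a}\in V(K)^k$, $\mathbf{b}\in V(K)^l$, up to isomorphism of $K$ preserving the tuples. Operations: $f$-union $(K,\mathbf{a},\mathbf{b})\cup_f(H,\mathbf{c},\mathbf{d})=(K\cup_fH,f_K(\mathbf{a})f_H(\mathbf{c}),f_K(\mathbf{b})f_H(\mathbf{d}))$;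 composition (for $|\mathbf{b}|=|\mathbf{c}|$) $(H,\mathbf{c},\mathbf{d})\cdot(K,\mathbf{a},\mathbf{b})=(H\cdot K,\mathbf{a},\mathbf{d})$ with $H\cdot K$ the quotient of $K\sqcup H$ identifying $b_i$ with $c_i$ for all $i$; involution $(K,\mathbf{a},\mathbf{b})^*=(K,\mathbf{b},\mathbf{a})$. Let $\mathbf{0}=(N_0,\emptyset,\emptyset)$ and $\mathbf{M}^{k,l}=(M,(v,\dots,v),(v,\dots,v))$ for the one-vertex loopless graph $M$ with $k$ inputs, $l$ outputs. $\ker\mathbf{b}$ is the partition of positions of $\mathbf{b}$ by equal entries. A skew graph category is a set of bilabelled graphs containing $\mathbf{0},\mathbf{M}^{1,1},\mathbf{M}^{0,2}$ and closed under all $f$-unions, under compositions $\mathbf{H}\cdot\mathbf{K}$ of $\mathbf{K}=(K,\mathbf{a},\mathbf{b})$, $\mathbf{H}=(H,\mathbf{c},\mathbf{d})$ with $\ker\mathbf{b}=\ker\mathbf{c}$, and involution. (For a skew graph category, $F$ as defined is a graph fibration.) *)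

theory Defs
  imports Main "HOL-Algebra.Coset"
begin

text \<open>Graphs are considered up to isomorphism: all
constructions below are relational (any representative is allowed) and all generated
sets are closed under isomorphism.\<close>

type_synonym graph = "nat set \<times> nat set set"

definition verts :: "graph \<Rightarrow> nat set" where "verts G = fst G"
definition edges :: "graph \<Rightarrow> nat set set" where "edges G = snd G"

definition wf_graph :: "graph \<Rightarrow> bool" where
  "wf_graph G \<longleftrightarrow> finite (verts G) \<and>
     (\<forall>e\<in>edges G. e \<subseteq> verts G \<and> (card e = 1 \<or> card e = 2))"

definition edgeless :: "nat \<Rightarrow> graph" where
  "edgeless k = ({..<k}, {})"

definition graph_iso :: "graph \<Rightarrow> graph \<Rightarrow> (nat \<Rightarrow> nat) \<Rightarrow> bool" where
  "graph_iso K K' \<phi> \<longleftrightarrow> bij_betw \<phi> (verts K) (verts K') \<and>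
     edges K' = (\<lambda>e. \<phi> ` e) ` edges K"

definition vertex_overlap :: "graph \<Rightarrow> graph \<Rightarrow> (nat \<times> nat) set \<Rightarrow> bool" where
  "vertex_overlap K H f \<longleftrightarrow> f \<subseteq> verts K \<times> verts H \<and>
     (\<forall>v w w'. (v, w) \<in> f \<and> (v, w') \<in> f \<longrightarrow> w = w') \<and>
     (\<forall>v v' w. (v, w) \<in> f \<and> (v', w) \<in> f \<longrightarrow> v = v')"

text \<open>R (with the maps phiK, phiH) is (a representative of) the f-union of K and H:
the quotient of the disjoint union identifying v with w for (v,w) in f.\<close>

definition is_funion :: "graph \<Rightarrow> graph \<Rightarrow> (nat \<times> nat) set \<Rightarrow> graph
    \<Rightarrow> (nat \<Rightarrow> nat) \<Rightarrow> (nat \<Rightarrow> nat) \<Rightarrow> bool" where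
  "is_funion K H f R \<phi>K \<phi>H \<longleftrightarrow> wf_graph R \<and>
     \<phi>K ` verts K \<subseteq> verts R \<and> \<phi>H ` verts H \<subseteq> verts R \<and>
     inj_on \<phi>K (verts K) \<and> inj_on \<phi>H (verts H) \<and>
     verts R = \<phi>K ` verts K \<union> \<phi>H ` verts H \<and>
     (\<forall>v\<in>verts K. \<forall>w\<in>verts H. \<phi>K v = \<phi>H w \<longleftrightarrow> (v, w) \<in> f) \<and>
     edges R = (\<lambda>e. \<phi>K ` e) ` edges K \<union> (\<lambda>e. \<phi>H ` e) ` edges H"

definition graph_inj_hom :: "graph \<Rightarrow> graph \<Rightarrow> (nat \<Rightarrow> nat) \<Rightarrow> bool" where
  "graph_inj_hom H K \<iota> \<longleftrightarrow> \<iota> ` verts H \<subseteq> verts K \<and> inj_on \<iota> (verts H) \<and>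
     (\<forall>e\<in>edges H. \<iota> ` e \<in> edges K)"

type_synonym bgraph = "graph \<times> nat list \<times> nat list"

definition wf_bgraph :: "bgraph \<Rightarrow> bool" where
  "wf_bgraph X \<longleftrightarrow> (case X of (K, a, b) \<Rightarrow> wf_graph K \<and> set a \<subseteq> verts K \<and> set b \<subseteq> verts K)"

definition bzero :: bgraph where "bzero = (({}, {}), [], [])"

definition bM :: "nat \<Rightarrow> nat \<Rightarrow> bgraph" where
  "bM k l = (({0}, {}), replicate k 0, replicate l 0)"

definition same_ker :: "nat list \<Rightarrow> nat list \<Rightarrow> bool" where
  "same_ker b c \<longleftrightarrow> length b = length c \<and>
     (\<forall>i<length b. \<forall>j<length b. b ! i = b ! j \<longleftrightarrow> c ! i = c ! j)"

text \<open>Composition H.K with ker b = ker c is the quotient of K + H identifying b_i with c_i,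
which is the f-union for the overlap f = {(b_i,c_i)}.\<close>

inductive_set gen_cat :: "bgraph set \<Rightarrow> bgraph set" for S where
  base: "X \<in> S \<Longrightarrow> X \<in> gen_cat S"
| zero: "bzero \<in> gen_cat S"
| M11: "bM 1 1 \<in> gen_cat S"
| M02: "bM 0 2 \<in> gen_cat S"
| iso: "(K, a, b) \<in> gen_cat S \<Longrightarrow> graph_iso K K' \<phi> \<Longrightarrow>
        (K', map \<phi> a, map \<phi> b) \<in> gen_cat S"
| union: "(K, a, b) \<in> gen_cat S \<Longrightarrow> (H, c, d) \<in> gen_cat S \<Longrightarrow> vertex_overlap K H f \<Longrightarrow>
        is_funion K H f R \<phi>K \<phi>H \<Longrightarrow>
        (R, map \<phi>K a @ map \<phi>H c, map \<phi>K b @ map \<phi>H d) \<in> gen_cat S"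
| comp: "(K, a, b) \<in> gen_cat S \<Longrightarrow> (H, c, d) \<in> gen_cat S \<Longrightarrow> same_ker b c \<Longrightarrow>
        is_funion K H {(b ! i, c ! i) | i. i < length b} R \<phi>K \<phi>H \<Longrightarrow>
        (R, map \<phi>K a, map \<phi>H d) \<in> gen_cat S"
| inv: "(K, a, b) \<in> gen_cat S \<Longrightarrow> (K, b, a) \<in> gen_cat S"

inductive_set graph_closure :: "bgraph set \<Rightarrow> graph set" for S where
  N0: "edgeless 0 \<in> graph_closure S"
| N1: "edgeless 1 \<in> graph_closure S"
| base: "(H, a, b) \<in> S \<Longrightarrow> H \<in> graph_closure S"
| iso: "K \<in> graph_closure S \<Longrightarrow> graph_iso K K' \<phi> \<Longrightarrow> K' \<in> graph_closure S"
| union: "K \<in> graph_closure S \<Longrightarrow> H \<in> graph_closure S \<Longrightarrow> vertex_overlap K H f \<Longrightarrow>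
        is_funion K H f R \<phi>K \<phi>H \<Longrightarrow> R \<in> graph_closure S"

text \<open>Elements are reduced words (no two equal adjacent letters); g_w = redw w.\<close>

fun cancel1 :: "'a \<Rightarrow> 'a list \<Rightarrow> 'a list" where
  "cancel1 x [] = [x]"
| "cancel1 x (y # ys) = (if x = y then ys else x # y # ys)"

definition redw :: "'a list \<Rightarrow> 'a list" where
  "redw w = foldr cancel1 w []"

definition Z2free :: "'a set \<Rightarrow> 'a list monoid" where
  "Z2free V = \<lparr>carrier = {w. set w \<subseteq> V \<and> successively (\<noteq>) w},
               mult = (\<lambda>x y. redw (x @ y)), one = []\<rparr>"

definition normal_closure :: "('a, 'b) monoid_scheme \<Rightarrow> 'a set \<Rightarrow> 'a set" where
  "normal_closure G X = \<Inter>{N. N \<lhd> G \<and> X \<subseteq> N}"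

text \<open>The graph fibration F of a set of bilabelled graphs: F(K) = {g_a^{-1} g_b}.\<close>

definition Fib :: "bgraph set \<Rightarrow> graph \<Rightarrow> nat list set" where
  "Fib C K = {redw (rev a @ b) | a b. (K, a, b) \<in> C}"

definition gens :: "bgraph set \<Rightarrow> graph \<Rightarrow> nat list set" where
  "gens S K = {redw (map \<iota> (redw (rev a @ b))) | H a b \<iota>.
                 (H, a, b) \<in> S \<and> graph_inj_hom H K \<iota>}"

end

theory Submission
  imports Defs
begin

(* Writing g_w for the reduced form of a word w, one first shows that every element of F(K)
   has the form g_w for some (K, (), w) in the category: composing with the cup
   M^{0,2} bends input labels into output labels.  Diagonal f-unions multiply such
   elements, the involution inverts them, and appending a word to both label tuples
   conjugates them, so F(K) is a normal subgroup as soon as it is nonempty.  Attaching a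
   generator (H, a, b) of S along an injective homomorphism into K puts iota(g_{a* b})
   into F(K).  Conversely, by induction over the generation of the category, the image
   of g_{a* b} under any injective homomorphism K -> R lies in every normal subgroup of
   Z_2^{*V(R)} containing the generators for R: an f-union acts by a conjugation and a
   product, a composition by a product in which the glued labels cancel. *)

section \<open>Reduced words and the group Z2free\<close>

abbreviation reduced :: "'a list \<Rightarrow> bool" where
  "reduced \<equiv> successively (\<noteq>)"

lemma reduced_cancel1: "reduced z \<Longrightarrow> reduced (cancel1 c z)"
  by (cases z) (auto simp: successively_Cons)

lemma cancel1_cancel1: "reduced z \<Longrightarrow> cancel1 c (cancel1 c z) = z"
  by (cases z; cases "tl z") (auto simp: successively_Cons)

lemma reduced_foldr_cancel1: "reduced z \<Longrightarrow> reduced (foldr cancel1 x z)"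
  by (induction x) (auto intro: reduced_cancel1)

lemma reduced_redw: "reduced (redw w)"
  unfolding redw_def by (rule reduced_foldr_cancel1) simp

lemma redw_Nil [simp]: "redw [] = []"
  by (simp add: redw_def)

lemma redw_Cons: "redw (c # w) = cancel1 c (redw w)"
  by (simp add: redw_def)

lemma redw_append: "redw (x @ y) = foldr cancel1 x (redw y)"
  by (simp add: redw_def)

lemma foldr_cancel1_redw: "reduced z \<Longrightarrow> foldr cancel1 (redw x) z = foldr cancel1 x z"
proof (induction x)
  case Nil
  then show ?case by simp
next
  case (Cons c x)
  show ?case
  proof (cases "\<exists>r. redw x = c # r")
    case True
    then obtain r where r: "redw x = c # r" by blast
    have "foldr cancel1 (c # x) z = cancel1 c (cancel1 c (foldr cancel1 r z))"
      using Cons r by simp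
    also have "\<dots> = foldr cancel1 r z"
      by (rule cancel1_cancel1[OF reduced_foldr_cancel1[OF Cons.prems]])
    finally show ?thesis by (simp add: redw_Cons r)
  next
    case False
    then have "cancel1 c (redw x) = c # redw x" by (cases "redw x") auto
    then show ?thesis using Cons by (simp add: redw_Cons)
  qed
qed

lemma redw_reduced: "reduced w \<Longrightarrow> redw w = w"
proof (induction w)
  case Nil
  then show ?case by simp
next
  case (Cons c w)
  then have "redw w = w" by (cases w) simp_all
  with Cons.prems show ?case by (cases w) (auto simp: redw_Cons)
qed

lemma redw_redw [simp]: "redw (redw w) = redw w"
  by (rule redw_reduced[OF reduced_redw])

lemma redw_append_redw_left [simp]: "redw (redw x @ y) = redw (x @ y)"
  by (simp add: redw_append foldr_cancel1_redw reduced_redw)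

lemma redw_append_redw_right [simp]: "redw (x @ redw y) = redw (x @ y)"
  by (simp add: redw_append)

lemma redw_rev_append_self: "redw (rev x @ x) = []"
proof -
  have "foldr cancel1 (rev x) (foldr cancel1 x z) = z" if "reduced z" for z
    using that by (induction x arbitrary: z) (simp_all add: cancel1_cancel1 reduced_foldr_cancel1)
  then show ?thesis by (simp add: redw_append redw_def)
qed

lemma redw_append_rev_self: "redw (x @ rev x) = []"
  using redw_rev_append_self[of "rev x"] by simp

lemma redw_append_trivial: "redw w = [] \<Longrightarrow> redw (x @ w @ y) = redw (x @ y)"
  by (metis redw_append_redw_left redw_append_redw_right append_Nil)

lemma redw_cancel_inverse_pair: "redw (x @ u @ rev u @ y) = redw (x @ y)"
  using redw_append_trivial[OF redw_append_rev_self, of x u y] by simp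

lemma set_redw_subset: "set (redw w) \<subseteq> set w"
proof (induction w)
  case (Cons c w)
  have "set (cancel1 c z) \<subseteq> insert c (set z)" for z :: "'a list"
    by (cases z) auto
  with Cons show ?case by (fastforce simp: redw_Cons)
qed simp

lemma redw_map_redw: "redw (map f (redw w)) = redw (map f w)"
proof (induction w)
  case (Cons c w)
  show ?case
  proof (cases "\<exists>r. redw w = c # r")
    case True
    then obtain r where r: "redw w = c # r" by blast
    have "redw (map f (c # w)) = cancel1 (f c) (cancel1 (f c) (redw (map f r)))"
      using Cons r by (simp add: redw_Cons)
    also have "\<dots> = redw (map f r)"
      by (simp add: cancel1_cancel1 reduced_redw)
    finally show ?thesis by (simp add: redw_Cons r)
  next
    case False
    then have "redw (c # w) = c # redw w" by (cases "redw w") (auto simp: redw_Cons)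
    then show ?thesis using Cons by (simp add: redw_Cons)
  qed
qed simp

lemma carrier_Z2free: "carrier (Z2free V) = {w. set w \<subseteq> V \<and> reduced w}"
  by (simp add: Z2free_def)

lemma mult_Z2free: "x \<otimes>\<^bsub>Z2free V\<^esub> y = redw (x @ y)"
  by (simp add: Z2free_def)

lemma one_Z2free: "\<one>\<^bsub>Z2free V\<^esub> = []"
  by (simp add: Z2free_def)

lemma redw_in_carrier_Z2free: "set w \<subseteq> V \<Longrightarrow> redw w \<in> carrier (Z2free V)"
  using set_redw_subset[of w] by (auto simp: carrier_Z2free reduced_redw)

lemma group_Z2free: "group (Z2free V)"
proof (rule groupI)
  fix x y
  assume "x \<in> carrier (Z2free V)" "y \<in> carrier (Z2free V)"
  then show "x \<otimes>\<^bsub>Z2free V\<^esub> y \<in> carrier (Z2free V)"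
    using redw_in_carrier_Z2free[of "x @ y" V] by (auto simp: mult_Z2free carrier_Z2free)
next
  fix x
  assume "x \<in> carrier (Z2free V)"
  then show "\<exists>y\<in>carrier (Z2free V). y \<otimes>\<^bsub>Z2free V\<^esub> x = \<one>\<^bsub>Z2free V\<^esub>"
    by (intro bexI[of _ "rev x"])
       (auto simp: one_Z2free mult_Z2free carrier_Z2free redw_rev_append_self successively_rev
             elim: successively_mono)
qed (auto simp: one_Z2free mult_Z2free carrier_Z2free redw_reduced)

lemma redw_append_eq_mult: "redw (x @ y) = redw x \<otimes>\<^bsub>Z2free V\<^esub> redw y"
  by (simp add: mult_Z2free)

lemma inv_redw_Z2free: "set u \<subseteq> V \<Longrightarrow> inv\<^bsub>Z2free V\<^esub> (redw u) = redw (rev u)"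
  by (rule group.inv_equality[OF group_Z2free])
     (auto simp: redw_append_eq_mult[symmetric] redw_rev_append_self one_Z2free
           intro!: redw_in_carrier_Z2free)

lemma Z2free_subgroup_Nil: "subgroup N (Z2free V) \<Longrightarrow> [] \<in> N"
  by (metis one_Z2free subgroup.one_closed)

lemma Z2free_subgroup_append:
  "subgroup N (Z2free V) \<Longrightarrow> redw x \<in> N \<Longrightarrow> redw y \<in> N \<Longrightarrow> redw (x @ y) \<in> N"
  by (metis redw_append_eq_mult subgroup.m_closed)

lemma Z2free_subgroup_rev:
  "subgroup N (Z2free V) \<Longrightarrow> set x \<subseteq> V \<Longrightarrow> redw x \<in> N \<Longrightarrow> redw (rev x) \<in> N"
  by (metis inv_redw_Z2free subgroup.m_inv_closed)

lemma Z2free_normal_conj: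
  assumes "N \<lhd> Z2free V" "set u \<subseteq> V" "redw w \<in> N"
  shows "redw (rev u @ w @ u) \<in> N"
proof -
  have "redw (rev u) \<in> carrier (Z2free V)"
    using assms(2) by (simp add: redw_in_carrier_Z2free)
  then have "redw (rev u) \<otimes>\<^bsub>Z2free V\<^esub> redw w \<otimes>\<^bsub>Z2free V\<^esub> inv\<^bsub>Z2free V\<^esub> redw (rev u) \<in> N"
    using group.normal_invE(2)[OF group_Z2free assms(1)] assms(3) by blast
  then show ?thesis
    using assms(2) by (simp add: inv_redw_Z2free redw_append_eq_mult[symmetric])
qed

lemma Z2free_normal_union_word:
  assumes "N \<lhd> Z2free V" "set c \<subseteq> V" "redw (rev a @ b) \<in> N" "redw (rev c @ d) \<in> N"
  shows "redw (rev (a @ c) @ b @ d) \<in> N"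
proof -
  have "redw (rev c @ (rev a @ b) @ c) \<in> N"
    using Z2free_normal_conj[OF assms(1-3)] .
  then have "redw ((rev c @ (rev a @ b) @ c) @ rev c @ d) \<in> N"
    by (rule Z2free_subgroup_append[OF normal_imp_subgroup[OF assms(1)] _ assms(4)])
  then show ?thesis
    using redw_cancel_inverse_pair[of "rev c @ rev a @ b" c d] by simp
qed

lemma Z2free_subgroup_compose_word:
  assumes "subgroup N (Z2free V)" "redw (rev a @ b) \<in> N" "redw (rev b @ d) \<in> N"
  shows "redw (rev a @ d) \<in> N"
  using Z2free_subgroup_append[OF assms] redw_cancel_inverse_pair[of "rev a" b d] by simp

section \<open>Injective homomorphisms and constructions in the generated category\<close>

lemma wf_graph_iso:
  assumes "wf_graph K" "graph_iso K K' \<phi>"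
  shows "wf_graph K'"
proof -
  have bij: "bij_betw \<phi> (verts K) (verts K')" and E: "edges K' = (\<lambda>e. \<phi> ` e) ` edges K"
    using assms(2) by (auto simp: graph_iso_def)
  have "card (\<phi> ` e) = card e" "\<phi> ` e \<subseteq> verts K'" if "e \<subseteq> verts K" for e
    using that bij inj_on_subset[of \<phi> "verts K" e]
    by (auto simp: bij_betw_def card_image)
  with assms(1) E bij show ?thesis
    by (auto simp: wf_graph_def bij_betw_finite)
qed

lemma graph_inj_hom_id: "graph_inj_hom K K id"
  by (auto simp: graph_inj_hom_def)

lemma graph_inj_hom_comp:
  assumes "graph_inj_hom K R0 \<psi>" "graph_inj_hom R0 R \<phi>"
  shows "graph_inj_hom K R (\<phi> \<circ> \<psi>)"
proof -
  have "inj_on (\<phi> \<circ> \<psi>) (verts K)"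
    using assms unfolding graph_inj_hom_def by (meson comp_inj_on inj_on_subset)
  moreover have "\<forall>e\<in>edges K. \<phi> ` \<psi> ` e \<in> edges R"
    using assms unfolding graph_inj_hom_def by blast
  ultimately show ?thesis
    using assms unfolding graph_inj_hom_def by (auto simp: image_comp)
qed

lemma graph_iso_imp_inj_hom: "graph_iso K K' \<psi> \<Longrightarrow> graph_inj_hom K K' \<psi>"
  by (auto simp: graph_iso_def graph_inj_hom_def bij_betw_def)

lemma is_funion_inj_homs:
  "is_funion K H f R \<phi>K \<phi>H \<Longrightarrow> graph_inj_hom K R \<phi>K \<and> graph_inj_hom H R \<phi>H"
  by (auto simp: is_funion_def graph_inj_hom_def)

lemma graph_inj_hom_set_map:
  "graph_inj_hom K R \<phi> \<Longrightarrow> set w \<subseteq> verts K \<Longrightarrow> set (map \<phi> w) \<subseteq> verts R"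
  by (auto simp: graph_inj_hom_def)

lemma is_funion_glued_labels:
  assumes "is_funion K H {(b ! i, c ! i) | i. i < length b} R \<phi>K \<phi>H"
    and "set b \<subseteq> verts K" "set c \<subseteq> verts H" "length b = length c"
  shows "map \<phi>K b = map \<phi>H c"
proof (rule nth_equalityI)
  fix i
  assume i: "i < length (map \<phi>K b)"
  then have "b ! i \<in> verts K" "c ! i \<in> verts H"
    using assms(2-4) nth_mem by fastforce+
  moreover have "(b ! i, c ! i) \<in> {(b ! i, c ! i) | i. i < length b}"
    using i by auto
  ultimately have "\<phi>K (b ! i) = \<phi>H (c ! i)"
    using assms(1) unfolding is_funion_def by blast
  then show "map \<phi>K b ! i = map \<phi>H c ! i"
    using i assms(4) by simp
qed (simp add: assms(4))

lemma gen_cat_M11: "(({0}, {}), [0], [0]) \<in> gen_cat S"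
  using gen_cat.M11[of S] by (simp add: bM_def)

lemma gen_cat_M02: "(({0}, {}), [], [0, 0]) \<in> gen_cat S"
  using gen_cat.M02[of S] by (simp add: bM_def numeral_2_eq_2)

lemma gen_cat_attach:
  assumes "(K, a, b) \<in> gen_cat S" "(H, c, d) \<in> gen_cat S"
    and "wf_graph K" "graph_inj_hom H K \<iota>"
  shows "(K, a @ map \<iota> c, b @ map \<iota> d) \<in> gen_cat S"
proof -
  let ?f = "(\<lambda>h. (\<iota> h, h)) ` verts H"
  have "vertex_overlap K H ?f"
    using assms(4) by (auto simp: vertex_overlap_def graph_inj_hom_def dest: inj_onD)
  moreover have "is_funion K H ?f K id \<iota>"
    using assms(3,4) unfolding is_funion_def graph_inj_hom_def by auto
  ultimately have "(K, map id a @ map \<iota> c, map id b @ map \<iota> d) \<in> gen_cat S"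
    by (rule gen_cat.union[OF assms(1,2)])
  then show ?thesis by simp
qed

lemma gen_cat_add_vertex:
  assumes "(K, a, b) \<in> gen_cat S" "(({0}, {}), c, d) \<in> gen_cat S" "wf_graph K"
  shows "((insert v (verts K), edges K), map (\<lambda>_. v) c @ a, map (\<lambda>_. v) d @ b) \<in> gen_cat S"
proof -
  let ?f = "if v \<in> verts K then {(0::nat, v)} else {}"
  have "vertex_overlap ({0}, {}) K ?f"
    by (auto simp: vertex_overlap_def verts_def)
  moreover have "is_funion ({0}, {}) K ?f (insert v (verts K), edges K) (\<lambda>_. v) id"
    using assms(3) by (auto simp: is_funion_def wf_graph_def verts_def edges_def)
  ultimately have "((insert v (verts K), edges K), map (\<lambda>_. v) c @ map id a, map (\<lambda>_. v) d @ map id b)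
      \<in> gen_cat S"
    by (rule gen_cat.union[OF assms(2,1)])
  then show ?thesis by simp
qed

lemma gen_cat_edgeless_id: "((set w, {}), w, w) \<in> gen_cat S"
proof (induction w)
  case Nil
  then show ?case using gen_cat.zero[of S] by (simp add: bzero_def)
next
  case (Cons v w)
  have "wf_graph (set w, {})" by (simp add: wf_graph_def verts_def edges_def)
  with gen_cat_add_vertex[OF Cons gen_cat_M11] show ?case
    by (simp add: verts_def edges_def)
qed

lemma gen_cat_edgeless_cup: "((insert v (set a), {}), a, v # v # a) \<in> gen_cat S"
proof -
  have "wf_graph (set a, {})" by (simp add: wf_graph_def verts_def edges_def)
  with gen_cat_add_vertex[OF gen_cat_edgeless_id gen_cat_M02] show ?thesis
    by (simp add: verts_def edges_def)
qed

lemma graph_closure_gen_cat: "K \<in> graph_closure S \<Longrightarrow> \<exists>a b. (K, a, b) \<in> gen_cat S"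
proof (induction rule: graph_closure.induct)
  case N0
  then show ?case using gen_cat.zero[of S] by (auto simp: bzero_def edgeless_def)
next
  case N1
  have "edgeless 1 = ({0}, {})" by (auto simp: edgeless_def)
  then show ?case using gen_cat_M11 by auto
qed (blast intro: gen_cat.base gen_cat.iso gen_cat.union)+

section \<open>The fibration of the generated category\<close>

context
  fixes S :: "bgraph set"
  assumes wf_S: "\<forall>X\<in>S. wf_bgraph X"
begin

lemma wf_bgraph_gen_cat: "X \<in> gen_cat S \<Longrightarrow> wf_bgraph X"
proof (induction rule: gen_cat.induct)
  case (base X)
  then show ?case using wf_S by blast
next
  case (iso K a b K' \<phi>)
  then have "\<phi> ` verts K = verts K'" by (auto simp: graph_iso_def bij_betw_def)
  with iso show ?case by (auto simp: wf_bgraph_def intro: wf_graph_iso)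
next
  case (union K a b H c d f R \<phi>K \<phi>H)
  then show ?case by (auto simp: wf_bgraph_def is_funion_def)
next
  case (comp K a b H c d R \<phi>K \<phi>H)
  then show ?case by (auto simp: wf_bgraph_def is_funion_def)
next
  case (inv K a b)
  then show ?case by (auto simp: wf_bgraph_def)
qed (simp_all add: wf_bgraph_def bzero_def bM_def wf_graph_def verts_def edges_def)

lemma wf_gen_cat:
  "(K, a, b) \<in> gen_cat S \<Longrightarrow> wf_graph K \<and> set a \<subseteq> verts K \<and> set b \<subseteq> verts K"
  using wf_bgraph_gen_cat[of "(K, a, b)"] by (simp add: wf_bgraph_def)

(* X is first extended by a second copy of v on both sides, then composed with the cup
   ((v, v, a) as outputs, a as inputs) on an edgeless graph. *)
lemma gen_cat_bend1:
  assumes X: "(K, v # a, b) \<in> gen_cat S"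
  shows "(K, a, v # b) \<in> gen_cat S"
proof -
  have wf: "wf_graph K" "v \<in> verts K" "set a \<subseteq> verts K"
    using wf_gen_cat[OF X] by auto
  have "((insert v (verts K), edges K), v # v # a, v # b) \<in> gen_cat S"
    using gen_cat_add_vertex[OF X gen_cat_M11 wf(1)] by simp
  then have Y: "(K, v # v # a, v # b) \<in> gen_cat S"
    using wf(2) by (simp add: insert_absorb verts_def edges_def)
  let ?l = "v # v # a"
  have "{(?l ! i, ?l ! i) | i. i < length ?l} = (\<lambda>x. (x, x)) ` set ?l"
    unfolding set_conv_nth by blast
  then have "is_funion (insert v (set a), {}) K {(?l ! i, ?l ! i) | i. i < length ?l} K id id"
    using wf by (auto simp: is_funion_def verts_def edges_def)
  moreover have "same_ker ?l ?l" by (simp add: same_ker_def)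
  ultimately show ?thesis
    using gen_cat.comp[OF gen_cat_edgeless_cup Y] by fastforce
qed

lemma gen_cat_bend: "(K, a, b) \<in> gen_cat S \<Longrightarrow> (K, [], rev a @ b) \<in> gen_cat S"
proof (induction a arbitrary: b)
  case (Cons v a)
  then show ?case using gen_cat_bend1 by fastforce
qed simp

lemma gen_cat_append_labels:
  assumes "(K, a, b) \<in> gen_cat S" "set w \<subseteq> verts K"
  shows "(K, a @ w, b @ w) \<in> gen_cat S"
proof -
  have "graph_inj_hom (set w, {}) K id"
    using assms(2) by (simp add: graph_inj_hom_def verts_def edges_def)
  then have "(K, a @ map id w, b @ map id w) \<in> gen_cat S"
    using gen_cat_attach[OF assms(1) gen_cat_edgeless_id] wf_gen_cat[OF assms(1)] by blast
  then show ?thesis by simp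
qed

(* Quantifying over all injective homomorphisms K -> R, not only the identity on K, is what
   makes the induction go through: the components of an f-union or a composition embed into
   it, and their invariants are needed in the bigger graph. *)
lemma gen_cat_word_in_normal_subgroup:
  assumes "(K, a, b) \<in> gen_cat S" "graph_inj_hom K R \<phi>" "N \<lhd> Z2free (verts R)" "gens S R \<subseteq> N"
  shows "redw (map \<phi> (rev a @ b)) \<in> N"
  using assms
proof (induction "(K, a, b)" arbitrary: K a b R \<phi> N rule: gen_cat.induct)
  case base
  then have "redw (map \<phi> (redw (rev a @ b))) \<in> gens S R"
    unfolding gens_def by blast
  with base show ?case by (auto simp: redw_map_redw)
next
  case zero
  then show ?case
    using Z2free_subgroup_Nil[OF normal_imp_subgroup] by (simp add: bzero_def)
next
  case M11
  then show ?case
    using Z2free_subgroup_Nil[OF normal_imp_subgroup] by (clarsimp simp: bM_def redw_Cons)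
next
  case M02
  then show ?case
    using Z2free_subgroup_Nil[OF normal_imp_subgroup] by (clarsimp simp: bM_def numeral_2_eq_2 redw_Cons)
next
  case (iso K0 a0 b0 K' \<psi>)
  then have "graph_inj_hom K0 R (\<phi> \<circ> \<psi>)"
    using graph_iso_imp_inj_hom graph_inj_hom_comp by blast
  with iso show ?case by (auto simp: rev_map)
next
  case (union K0 a0 b0 H c d f R0 \<phi>K \<phi>H)
  have hom_K0: "graph_inj_hom K0 R (\<phi> \<circ> \<phi>K)" and hom_H: "graph_inj_hom H R (\<phi> \<circ> \<phi>H)"
    using is_funion_inj_homs[OF union(6)] graph_inj_hom_comp[OF _ union(7)] by blast+
  have "set (map (\<phi> \<circ> \<phi>H) c) \<subseteq> verts R"
    using graph_inj_hom_set_map[OF hom_H] wf_gen_cat[OF union(3)] by blast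
  moreover have "redw (rev (map (\<phi> \<circ> \<phi>K) a0) @ map (\<phi> \<circ> \<phi>K) b0) \<in> N"
    using union(2)[OF hom_K0 union(8,9)] by (simp add: rev_map)
  moreover have "redw (rev (map (\<phi> \<circ> \<phi>H) c) @ map (\<phi> \<circ> \<phi>H) d) \<in> N"
    using union(4)[OF hom_H union(8,9)] by (simp add: rev_map)
  ultimately have "redw (rev (map (\<phi> \<circ> \<phi>K) a0 @ map (\<phi> \<circ> \<phi>H) c) @
      map (\<phi> \<circ> \<phi>K) b0 @ map (\<phi> \<circ> \<phi>H) d) \<in> N"
    by (rule Z2free_normal_union_word[OF union(8)])
  then show ?case by (simp add: rev_map)
next
  case (comp K0 a0 b0 H c d R0 \<phi>K \<phi>H)
  have hom_K0: "graph_inj_hom K0 R (\<phi> \<circ> \<phi>K)" and hom_H: "graph_inj_hom H R (\<phi> \<circ> \<phi>H)"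
    using is_funion_inj_homs[OF comp(6)] graph_inj_hom_comp[OF _ comp(7)] by blast+
  have "map \<phi>K b0 = map \<phi>H c"
    using is_funion_glued_labels[OF comp(6)] wf_gen_cat[OF comp(1)] wf_gen_cat[OF comp(3)] comp(5)
    by (simp add: same_ker_def)
  then have glued: "map (\<phi> \<circ> \<phi>H) c = map (\<phi> \<circ> \<phi>K) b0"
    by (metis map_map)
  have "redw (rev (map (\<phi> \<circ> \<phi>K) a0) @ map (\<phi> \<circ> \<phi>K) b0) \<in> N"
    using comp(2)[OF hom_K0 comp(8,9)] by (simp add: rev_map)
  moreover have "redw (rev (map (\<phi> \<circ> \<phi>K) b0) @ map (\<phi> \<circ> \<phi>H) d) \<in> N"
    using comp(4)[OF hom_H comp(8,9)] unfolding map_append rev_map[symmetric] glued .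
  ultimately have "redw (rev (map (\<phi> \<circ> \<phi>K) a0) @ map (\<phi> \<circ> \<phi>H) d) \<in> N"
    by (rule Z2free_subgroup_compose_word[OF normal_imp_subgroup[OF comp(8)]])
  then show ?case by (simp add: rev_map)
next
  case (inv K0 a0 b0)
  have "set (map \<phi> (rev a0 @ b0)) \<subseteq> verts R"
    using graph_inj_hom_set_map[OF inv(3)] wf_gen_cat[OF inv(1)] by simp
  then have "redw (rev (map \<phi> (rev a0 @ b0))) \<in> N"
    using Z2free_subgroup_rev[OF normal_imp_subgroup[OF inv(4)]] inv(2-5) by blast
  then show ?case by (simp add: rev_map)
qed

lemma mem_Fib_gen_cat: "x \<in> Fib (gen_cat S) K \<longleftrightarrow> (\<exists>w. (K, [], w) \<in> gen_cat S \<and> x = redw w)"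
proof
  assume "x \<in> Fib (gen_cat S) K"
  then obtain a b where "(K, a, b) \<in> gen_cat S" "x = redw (rev a @ b)"
    unfolding Fib_def by blast
  then show "\<exists>w. (K, [], w) \<in> gen_cat S \<and> x = redw w"
    using gen_cat_bend by blast
next
  assume "\<exists>w. (K, [], w) \<in> gen_cat S \<and> x = redw w"
  then show "x \<in> Fib (gen_cat S) K"
    unfolding Fib_def by force
qed

lemma Fib_subset_normal_closure: "Fib (gen_cat S) K \<subseteq> normal_closure (Z2free (verts K)) (gens S K)"
proof
  fix x
  assume "x \<in> Fib (gen_cat S) K"
  then obtain a b where "(K, a, b) \<in> gen_cat S" "x = redw (rev a @ b)"
    unfolding Fib_def by blast
  then show "x \<in> normal_closure (Z2free (verts K)) (gens S K)"
    unfolding normal_closure_def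
    using gen_cat_word_in_normal_subgroup[where \<phi> = id, OF _ graph_inj_hom_id] by auto
qed

lemma normal_Fib:
  assumes "Fib (gen_cat S) K \<noteq> {}"
  shows "Fib (gen_cat S) K \<lhd> Z2free (verts K)"
proof -
  let ?G = "Z2free (verts K)" and ?F = "Fib (gen_cat S) K"
  have in_carrier: "?F \<subseteq> carrier ?G"
  proof
    fix x
    assume "x \<in> ?F"
    then obtain w where w: "(K, [], w) \<in> gen_cat S" "x = redw w"
      unfolding mem_Fib_gen_cat by blast
    then show "x \<in> carrier ?G"
      using wf_gen_cat[OF w(1)] by (simp add: redw_in_carrier_Z2free)
  qed
  have "subgroup ?F ?G"
  proof (rule group.subgroupI[OF group_Z2free in_carrier assms])
    fix x
    assume "x \<in> ?F"
    then obtain w where w: "(K, [], w) \<in> gen_cat S" "x = redw w"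
      unfolding mem_Fib_gen_cat by blast
    have "(K, [], rev w @ []) \<in> gen_cat S"
      using gen_cat_bend[OF gen_cat.inv[OF w(1)]] .
    then have "redw (rev w) \<in> ?F"
      unfolding mem_Fib_gen_cat by auto
    moreover have "inv\<^bsub>?G\<^esub> x = redw (rev w)"
      using w(2) wf_gen_cat[OF w(1)] by (simp add: inv_redw_Z2free)
    ultimately show "inv\<^bsub>?G\<^esub> x \<in> ?F" by simp
  next
    fix x y
    assume "x \<in> ?F" "y \<in> ?F"
    then obtain v w where v: "(K, [], v) \<in> gen_cat S" "x = redw v"
      and w: "(K, [], w) \<in> gen_cat S" "y = redw w"
      unfolding mem_Fib_gen_cat by blast
    have "(K, [] @ map id [], v @ map id w) \<in> gen_cat S"
      using gen_cat_attach[OF v(1) w(1)] wf_gen_cat[OF v(1)] graph_inj_hom_id by blast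
    then have "redw (v @ w) \<in> ?F"
      unfolding mem_Fib_gen_cat by auto
    then show "x \<otimes>\<^bsub>?G\<^esub> y \<in> ?F"
      using v(2) w(2) by (simp add: mult_Z2free)
  qed
  moreover have "x \<otimes>\<^bsub>?G\<^esub> h \<otimes>\<^bsub>?G\<^esub> inv\<^bsub>?G\<^esub> x \<in> ?F"
    if x: "x \<in> carrier ?G" and h: "h \<in> ?F" for x h
  proof -
    obtain w where w: "(K, [], w) \<in> gen_cat S" "h = redw w"
      using h unfolding mem_Fib_gen_cat by blast
    have x_word: "set x \<subseteq> verts K" "redw x = x"
      using x by (auto simp: carrier_Z2free redw_reduced)
    have "(K, [] @ rev x, w @ rev x) \<in> gen_cat S"
      using gen_cat_append_labels[OF w(1)] x_word(1) by simp
    then have "(K, [], x @ w @ rev x) \<in> gen_cat S"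
      using gen_cat_bend by fastforce
    then have "redw (x @ w @ rev x) \<in> ?F"
      unfolding mem_Fib_gen_cat by auto
    moreover have "inv\<^bsub>?G\<^esub> x = redw (rev x)"
      using inv_redw_Z2free[OF x_word(1)] x_word(2) by simp
    then have "x \<otimes>\<^bsub>?G\<^esub> h \<otimes>\<^bsub>?G\<^esub> inv\<^bsub>?G\<^esub> x = redw (x @ w @ rev x)"
      using w(2) by (simp add: mult_Z2free)
    ultimately show ?thesis by simp
  qed
  ultimately show ?thesis
    by (rule group.normal_invI[OF group_Z2free])
qed

lemma gens_subset_Fib:
  assumes "Fib (gen_cat S) K \<noteq> {}"
  shows "gens S K \<subseteq> Fib (gen_cat S) K"
proof
  fix g
  assume "g \<in> gens S K"
  then obtain H a b \<iota> where g: "g = redw (map \<iota> (redw (rev a @ b)))"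
    and H: "(H, a, b) \<in> S" and \<iota>: "graph_inj_hom H K \<iota>"
    unfolding gens_def by blast
  have "[] \<in> Fib (gen_cat S) K"
    using Z2free_subgroup_Nil[OF normal_imp_subgroup[OF normal_Fib[OF assms]]] .
  then obtain w where w: "(K, [], w) \<in> gen_cat S" "redw w = []"
    by (auto simp: mem_Fib_gen_cat)
  have "(K, map \<iota> a, w @ map \<iota> b) \<in> gen_cat S"
    using gen_cat_attach[OF w(1) gen_cat.base[OF H] _ \<iota>] wf_gen_cat[OF w(1)] by simp
  then have "(K, [], rev (map \<iota> a) @ w @ map \<iota> b) \<in> gen_cat S"
    using gen_cat_bend by fastforce
  moreover have "redw (rev (map \<iota> a) @ w @ map \<iota> b) = g"
    using redw_append_trivial[OF w(2)] by (simp add: g redw_map_redw rev_map)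
  ultimately show "g \<in> Fib (gen_cat S) K"
    by (auto simp: mem_Fib_gen_cat)
qed

end

theorem proposition2p29:
  fixes S :: "bgraph set"
  assumes "\<forall>X\<in>S. wf_bgraph X"
  shows "(\<forall>K\<in>graph_closure S. Fib (gen_cat S) K \<noteq> {}) \<and>
         (\<forall>K. wf_graph K \<and> Fib (gen_cat S) K \<noteq> {} \<longrightarrow>
              Fib (gen_cat S) K = normal_closure (Z2free (verts K)) (gens S K))"
proof (intro conjI ballI allI impI)
  fix K
  assume "K \<in> graph_closure S"
  then show "Fib (gen_cat S) K \<noteq> {}"
    using graph_closure_gen_cat unfolding Fib_def by blast
next
  fix K
  assume "wf_graph K \<and> Fib (gen_cat S) K \<noteq> {}"
  then have "Fib (gen_cat S) K \<lhd> Z2free (verts K)" "gens S K \<subseteq> Fib (gen_cat S) K"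
    using normal_Fib[OF assms] gens_subset_Fib[OF assms] by auto
  then have "normal_closure (Z2free (verts K)) (gens S K) \<subseteq> Fib (gen_cat S) K"
    unfolding normal_closure_def by blast
  with Fib_subset_normal_closure[OF assms] show "Fib (gen_cat S) K = normal_closure (Z2free (verts K)) (gens S K)"
    by (rule subset_antisym)
qed

end
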